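(* Fix integers $p\ge 3$, $q\ge 1$ and a real $\eta$ with $0<\eta<\frac{1}{7p^5q}$. For all sufficiently large $n$, for the graph $G$ described in the context, the set $S=\{v\in V(G): d_G(v)\le (\frac{p-1}{p}-5\eta)n\}$ satisfies $|S|\le \eta n$.
   Context: $B_{p,q}=K_p\nabla qK_1$ is the join of a clique $K_p$ and an independent set of $q$ vertices. $\mathcal{G}(n,p,q)$ is the set of $n$-vertex graphs with chromatic number greater than $p$ that contain no subgraph isomorphic to $B_{p,q}$ and have the maximum number of edges among all such graphs. $G$ is a graph in $\mathcal{G}(n,p,q)$ whose minimum degree equals $\min_{F\in\mathcal{G}(n,p,q)}\delta(F)$. $d_G(v)$ is the degree of $v$ in $G$. *)

theory Defs
  imports Complex_Main
begin

definition simple_graph :: "nat \<Rightarrow> nat set set \<Rightarrow> bool" where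
  "simple_graph n E \<longleftrightarrow> (\<forall>e\<in>E. \<exists>u v. u \<noteq> v \<and> u < n \<and> v < n \<and> e = {u, v})"

definition colorable :: "nat \<Rightarrow> nat set set \<Rightarrow> nat \<Rightarrow> bool" where
  "colorable n E k \<longleftrightarrow>
     (\<exists>c :: nat \<Rightarrow> nat. (\<forall>v<n. c v < k) \<and> (\<forall>u v. u \<noteq> v \<longrightarrow> {u, v} \<in> E \<longrightarrow> c u \<noteq> c v))"

definition chromatic_number :: "nat \<Rightarrow> nat set set \<Rightarrow> nat" where
  "chromatic_number n E = (LEAST k. colorable n E k)"

definition contains_subgraph :: "nat \<Rightarrow> nat set set \<Rightarrow> nat \<Rightarrow> nat set set \<Rightarrow> bool" where
  "contains_subgraph n E m F \<longleftrightarrow>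
     (\<exists>f. inj_on f {..<m} \<and> f ` {..<m} \<subseteq> {..<n} \<and>
          (\<forall>u v. {u, v} \<in> F \<longrightarrow> {f u, f v} \<in> E))"

text \<open>B_{p,q} = K_p join (q K_1): vertices {..<p+q}; vertices < p form the clique,
the other q vertices are independent and adjacent to every clique vertex.\<close>
definition book_edges :: "nat \<Rightarrow> nat \<Rightarrow> nat set set" where
  "book_edges p q = {{u, v} | u v. u \<noteq> v \<and> u < p + q \<and> v < p + q \<and> (u < p \<or> v < p)}"

definition degree :: "nat set set \<Rightarrow> nat \<Rightarrow> nat" where
  "degree E v = card {u. {u, v} \<in> E}"

definition min_degree :: "nat \<Rightarrow> nat set set \<Rightarrow> nat" where
  "min_degree n E = Min (degree E ` {..<n})"

definition admissible :: "nat \<Rightarrow> nat \<Rightarrow> nat \<Rightarrow> nat set set \<Rightarrow> bool" where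
  "admissible n p q E \<longleftrightarrow> simple_graph n E \<and> chromatic_number n E > p \<and>
     \<not> contains_subgraph n E (p + q) (book_edges p q)"

definition extremal_family :: "nat \<Rightarrow> nat \<Rightarrow> nat \<Rightarrow> nat set set set" where
  "extremal_family n p q =
     {E. admissible n p q E \<and> (\<forall>E'. admissible n p q E' \<longrightarrow> card E' \<le> card E)}"

end

theory Submission
  imports Defs
begin

(* An extremal graph has at least as many edges as a B_{p,q}-free graph with chromatic number
   greater than p obtained from the Turan graph T_p(n) by planting a 5-cycle in two of its parts,
   so its degree sum is at least (1 - 1/p) n^2 - 5n.  If more than eta n vertices had degree at most
   ((p - 1)/p - 5 eta) n, deleting ceil(eta n) of them would leave a vertex set W whose internal
   degree sum exceeds (1 - 1/p + eta^2) |W| (|W| - 1) by a constant.  Deleting vertices of small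
   degree one at a time then yields a large set in which every vertex has more than
   (1 - 1/p + eta^2) (|W'| - 1) neighbours; there any p vertices have q common neighbours, and a
   greedy choice produces a copy of B_{p,q}. *)

section \<open>Degrees within vertex sets\<close>

definition degree_in :: "nat set set \<Rightarrow> nat set \<Rightarrow> nat \<Rightarrow> nat" where
  "degree_in E A v = card {u\<in>A. {u, v} \<in> E}"

lemma simple_graph_edgeD:
  assumes "simple_graph n E" "{u, v} \<in> E"
  shows "u < n" "v < n" "u \<noteq> v"
proof -
  obtain a b where "a \<noteq> b" "a < n" "b < n" "{u, v} = {a, b}"
    using assms unfolding simple_graph_def by blast
  then show "u < n" "v < n" "u \<noteq> v" by (auto simp: doubleton_eq_iff)
qed

lemma simple_graph_finite: "simple_graph n E \<Longrightarrow> finite E"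
  unfolding simple_graph_def
  by (rule finite_subset[of _ "Pow {..<n}"]) auto

lemma degree_in_conv_sum:
  "finite A \<Longrightarrow> degree_in E A v = (\<Sum>u\<in>A. if {u, v} \<in> E then 1 else 0)"
  unfolding degree_in_def by (simp add: sum.If_cases Int_def)

lemma degree_eq_degree_in:
  assumes "simple_graph n E"
  shows "degree E v = degree_in E {..<n} v"
proof -
  have "{u. {u, v} \<in> E} = {u\<in>{..<n}. {u, v} \<in> E}"
    using simple_graph_edgeD[OF assms] by auto
  then show ?thesis unfolding degree_def degree_in_def by simp
qed

lemma degree_in_le_card: "finite A \<Longrightarrow> degree_in E A v \<le> card A"
  unfolding degree_in_def by (rule card_mono) auto

lemma degree_in_mono: "finite B \<Longrightarrow> A \<subseteq> B \<Longrightarrow> degree_in E A v \<le> degree_in E B v"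
  unfolding degree_in_def by (rule card_mono) auto

lemma degree_in_Un:
  "finite A \<Longrightarrow> finite B \<Longrightarrow> A \<inter> B = {} \<Longrightarrow>
    degree_in E (A \<union> B) v = degree_in E A v + degree_in E B v"
  by (simp add: degree_in_conv_sum sum.union_disjoint)

lemma sum_degree_in_swap:
  assumes "finite A" "finite B"
  shows "(\<Sum>v\<in>A. degree_in E B v) = (\<Sum>u\<in>B. degree_in E A u)"
proof -
  have "(\<Sum>v\<in>A. degree_in E B v) = (\<Sum>v\<in>A. \<Sum>u\<in>B. if {u, v} \<in> E then 1 else 0)"
    using assms by (simp add: degree_in_conv_sum)
  also have "\<dots> = (\<Sum>u\<in>B. \<Sum>v\<in>A. if {v, u} \<in> E then 1 else 0)"
    by (subst sum.swap) (simp add: insert_commute)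
  also have "\<dots> = (\<Sum>u\<in>B. degree_in E A u)"
    using assms by (simp add: degree_in_conv_sum)
  finally show ?thesis .
qed

lemma sum_degree_eq_twice_card_edges:
  assumes simple: "simple_graph n E"
  shows "(\<Sum>v<n. degree E v) = 2 * card E"
proof -
  have ends: "card {(v, u). {u, v} = e} = 2" if "e \<in> E" for e
  proof -
    obtain a b where "a \<noteq> b" "e = {a, b}" using simple \<open>e \<in> E\<close> unfolding simple_graph_def by blast
    moreover from this have "{(v, u). {u, v} = e} = {(a, b), (b, a)}" by (auto simp: doubleton_eq_iff)
    ultimately show ?thesis by simp
  qed
  have "(\<Sum>v<n. degree E v) = card (SIGMA v:{..<n}. {u. {u, v} \<in> E})"
    using simple_graph_edgeD[OF simple]
    by (simp add: degree_def finite_subset[of _ "{..<n}"] subset_eq)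
  also have "(SIGMA v:{..<n}. {u. {u, v} \<in> E}) = (\<Union>e\<in>E. {(v, u). {u, v} = e})"
    using simple_graph_edgeD[OF simple] by auto
  also have "card \<dots> = (\<Sum>e\<in>E. card {(v, u). {u, v} = e})"
    using simple_graph_finite[OF simple] ends by (intro card_UN_disjoint) (auto intro: card_ge_0_finite)
  also have "\<dots> = 2 * card E" using ends by simp
  finally show ?thesis .
qed

lemma sum_degree_le_split:
  assumes simple: "simple_graph n E" and "T \<subseteq> {..<n}"
  defines "W \<equiv> {..<n} - T"
  shows "(\<Sum>v<n. degree E v) \<le> (\<Sum>v\<in>W. degree_in E W v) + 2 * (\<Sum>v\<in>T. degree E v)"
proof -
  have fin: "finite T" "finite W" and part: "{..<n} = W \<union> T" "W \<inter> T = {}"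
    using assms(2) finite_subset unfolding W_def by auto
  have "(\<Sum>v<n. degree E v)
      = (\<Sum>v\<in>W. degree_in E W v) + (\<Sum>v\<in>W. degree_in E T v) + (\<Sum>v\<in>T. degree E v)"
    using fin part by (simp add: sum.union_disjoint degree_eq_degree_in[OF simple] degree_in_Un sum.distrib)
  also have "(\<Sum>v\<in>W. degree_in E T v) = (\<Sum>u\<in>T. degree_in E W u)"
    using fin(2,1) by (rule sum_degree_in_swap)
  also have "\<dots> \<le> (\<Sum>u\<in>T. degree E u)"
    using fin part by (intro sum_mono) (simp add: degree_eq_degree_in[OF simple] degree_in_mono)
  finally show ?thesis by simp
qed

lemma sum_degree_in_Diff_ge:
  fixes b :: real
  assumes simple: "simple_graph n E" and T: "T \<subseteq> {..<n}" and low: "\<forall>v\<in>T. real (degree E v) \<le> b"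
  shows "real (\<Sum>v<n. degree E v) - 2 * real (card T) * b
    \<le> real (\<Sum>v\<in>{..<n} - T. degree_in E ({..<n} - T) v)"
proof -
  have "real (\<Sum>v\<in>T. degree E v) \<le> real (card T) * b"
    using low sum_mono[of T "\<lambda>v. real (degree E v)" "\<lambda>_. b"] by simp
  moreover have "real (\<Sum>v<n. degree E v)
      \<le> real (\<Sum>v\<in>{..<n} - T. degree_in E ({..<n} - T) v) + 2 * real (\<Sum>v\<in>T. degree E v)"
    using of_nat_mono[OF sum_degree_le_split[OF simple T]] by simp
  ultimately show ?thesis by linarith
qed

lemma sum_degree_in_remove:
  assumes simple: "simple_graph n E" and "finite W" "v \<in> W"
  shows "(\<Sum>x\<in>W. degree_in E W x) = (\<Sum>x\<in>W - {v}. degree_in E (W - {v}) x) + 2 * degree_in E W v"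
proof -
  define W' where "W' = W - {v}"
  have W: "W = W' \<union> {v}" "W' \<inter> {v} = {}" "finite W'" using assms unfolding W'_def by auto
  have no_loop: "degree_in E {v} v = 0"
    using simple_graph_edgeD(3)[OF simple, of v v] by (auto simp: degree_in_conv_sum)
  have "(\<Sum>x\<in>W. degree_in E W x)
      = (\<Sum>x\<in>W'. degree_in E W' x) + (\<Sum>x\<in>W'. degree_in E {v} x) + degree_in E W v"
    using W by (simp add: sum.union_disjoint degree_in_Un sum.distrib del: Un_insert_right)
  also have "(\<Sum>x\<in>W'. degree_in E {v} x) = degree_in E W' v"
    using sum_degree_in_swap[of W' "{v}"] W(3) by simp
  also have "\<dots> = degree_in E W v"
    using W no_loop by (simp add: degree_in_Un del: Un_insert_right)
  finally show ?thesis unfolding W'_def by simp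
qed

lemma colorable_mono: "colorable n E j \<Longrightarrow> j \<le> k \<Longrightarrow> colorable n E k"
  unfolding colorable_def using order_less_le_trans by blast

lemma chromatic_number_gt_if_not_colorable:
  assumes "\<not> colorable n E k"
  shows "k < chromatic_number n E"
proof -
  have "colorable n E n" unfolding colorable_def by (rule exI[of _ id]) auto
  then have "colorable n E (chromatic_number n E)" unfolding chromatic_number_def by (rule LeastI)
  then show ?thesis using assms colorable_mono not_less by blast
qed

section \<open>Dense graphs contain books\<close>

lemma contains_book:
  assumes "K \<subseteq> {..<n}" "C \<subseteq> {..<n}" "K \<inter> C = {}" "finite K" "finite C"
    and "card K = p" "card C = q"
    and adj: "\<forall>x\<in>K. \<forall>y\<in>K \<union> C. x \<noteq> y \<longrightarrow> {x, y} \<in> E"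
  shows "contains_subgraph n E (p + q) (book_edges p q)"
proof -
  define xs where "xs = sorted_list_of_set K @ sorted_list_of_set C"
  have xs: "distinct xs" "length xs = p + q" "set xs = K \<union> C" "set (take p xs) = K"
    using assms(3-7) unfolding xs_def by auto
  have edge: "{xs ! i, xs ! j} \<in> E" if "i \<noteq> j" "i < p + q" "j < p + q" "i < p" for i j
  proof -
    have "xs ! i \<in> K" using that(4) xs(2,4) nth_mem[of i "take p xs"] by simp
    moreover have "xs ! j \<in> K \<union> C" using that(3) xs(2,3) nth_mem by metis
    moreover have "xs ! i \<noteq> xs ! j" using that(1-3) xs(1,2) nth_eq_iff_index_eq by metis
    ultimately show ?thesis using adj by simp
  qed
  show ?thesis unfolding contains_subgraph_def
  proof (intro exI conjI allI impI)
    show "inj_on (nth xs) {..<p + q}" using xs by (simp add: inj_on_nth)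
    show "nth xs ` {..<p + q} \<subseteq> {..<n}"
      using xs(2,3) assms(1,2) nth_image[of "length xs" xs] by auto
  next
    fix u v assume "{u, v} \<in> book_edges p q"
    then obtain a b where "{u, v} = {a, b}" "a \<noteq> b" "a < p + q" "b < p + q" "a < p \<or> b < p"
      unfolding book_edges_def by blast
    then show "{xs ! u, xs ! v} \<in> E"
      using edge[of a b] edge[of b a] by (auto simp: doubleton_eq_iff insert_commute)
  qed
qed

lemma contains_book_if_common_neighbourhoods_large:
  assumes simple: "simple_graph n E" and W: "W \<subseteq> {..<n}" and "q \<ge> 1"
    and common: "\<And>K. K \<subseteq> W \<Longrightarrow> card K \<le> p \<Longrightarrow> q \<le> card {u\<in>W. \<forall>x\<in>K. {u, x} \<in> E}"
  shows "contains_subgraph n E (p + q) (book_edges p q)"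
proof -
  have fin: "finite W" using W finite_subset by blast
  have no_loop: "{u, u} \<notin> E" for u using simple_graph_edgeD(3)[OF simple] by blast
  have "\<exists>K\<subseteq>W. card K = m \<and> (\<forall>x\<in>K. \<forall>y\<in>K. x \<noteq> y \<longrightarrow> {x, y} \<in> E)" if "m \<le> p" for m
    using that
  proof (induction m)
    case 0
    show ?case by (intro exI[of _ "{}"]) simp
  next
    case (Suc m)
    then obtain K where K: "K \<subseteq> W" "card K = m" "\<forall>x\<in>K. \<forall>y\<in>K. x \<noteq> y \<longrightarrow> {x, y} \<in> E"
      by auto
    have "q \<le> card {u\<in>W. \<forall>x\<in>K. {u, x} \<in> E}" using common[OF K(1)] Suc.prems K(2) by simp
    then have "{u\<in>W. \<forall>x\<in>K. {u, x} \<in> E} \<noteq> {}" using \<open>q \<ge> 1\<close> by (intro notI) simp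
    then obtain u where u: "u \<in> W" "\<forall>x\<in>K. {u, x} \<in> E" by auto
    then have "u \<notin> K" using no_loop by blast
    moreover have "finite K" using fin K(1) by (rule rev_finite_subset)
    ultimately have "card (insert u K) = Suc m" using K(2) by simp
    moreover have "\<forall>x\<in>insert u K. \<forall>y\<in>insert u K. x \<noteq> y \<longrightarrow> {x, y} \<in> E"
      using K(3) u(2) by (auto simp: insert_commute)
    ultimately show ?case using K(1) u(1) by (intro exI[of _ "insert u K"]) simp
  qed
  then obtain K where K: "K \<subseteq> W" "card K = p" "\<forall>x\<in>K. \<forall>y\<in>K. x \<noteq> y \<longrightarrow> {x, y} \<in> E"
    by blast
  have "q \<le> card {u\<in>W. \<forall>x\<in>K. {u, x} \<in> E}" using common[OF K(1)] K(2) by simp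
  then obtain C where C: "C \<subseteq> {u\<in>W. \<forall>x\<in>K. {u, x} \<in> E}" "card C = q"
    by (rule obtain_subset_with_card_n)
  show ?thesis
  proof (rule contains_book)
    show "K \<inter> C = {}" using C(1) no_loop by blast
    show "\<forall>x\<in>K. \<forall>y\<in>K \<union> C. x \<noteq> y \<longrightarrow> {x, y} \<in> E"
      using K(3) C(1) by (fastforce simp: insert_commute)
  qed (use K(1,2) C W in \<open>auto intro: rev_finite_subset[OF fin]\<close>)
qed

lemma card_common_neighbours_ge:
  fixes d :: real
  assumes W: "finite W" and K: "K \<subseteq> W"
    and non_nbrs: "\<forall>x\<in>K. real (card {u\<in>W. {u, x} \<notin> E}) \<le> d"
  shows "real (card W) - real (card K) * d \<le> real (card {u\<in>W. \<forall>x\<in>K. {u, x} \<in> E})"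
proof -
  define C where "C = {u\<in>W. \<forall>x\<in>K. {u, x} \<in> E}"
  have finK: "finite K" using W K by (rule rev_finite_subset)
  have "card (W - C) \<le> card (\<Union>x\<in>K. {u\<in>W. {u, x} \<notin> E})"
    unfolding C_def using W finK by (intro card_mono) auto
  also have "\<dots> \<le> (\<Sum>x\<in>K. card {u\<in>W. {u, x} \<notin> E})"
    using finK by (rule card_UN_le)
  finally have "real (card (W - C)) \<le> (\<Sum>x\<in>K. real (card {u\<in>W. {u, x} \<notin> E}))"
    by (simp flip: of_nat_sum)
  also have "\<dots> \<le> real (card K) * d"
    using non_nbrs sum_mono[of K "\<lambda>x. real (card {u\<in>W. {u, x} \<notin> E})" "\<lambda>_. d"] by simp
  finally show ?thesis
    unfolding C_def using W by (simp add: card_Diff_subset card_mono)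
qed

lemma card_common_neighbours_ge_if_min_degree:
  fixes \<epsilon> :: real
  assumes W: "finite W" and K: "K \<subseteq> W" "card K \<le> p"
    and "p \<ge> 1" and \<epsilon>: "0 < \<epsilon>" "\<epsilon> \<le> 1 / real p"
    and min_degree: "\<forall>v\<in>W. (1 - 1 / real p + \<epsilon>) * (real (card W) - 1) < real (degree_in E W v)"
    and large: "real (p + q) / \<epsilon> \<le> real (card W)"
  shows "q \<le> card {u\<in>W. \<forall>x\<in>K. {u, x} \<in> E}"
proof -
  define k where "k = real (card W)"
  define m where "m = real (card K)"
  have "1 / real p \<le> 1" using \<open>p \<ge> 1\<close> by simp
  then have "\<epsilon> \<le> 1" using \<epsilon> by linarith
  have \<epsilon>k: "real (p + q) \<le> \<epsilon> * k" using large \<epsilon> unfolding k_def by (simp add: field_simps)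
  have "real (card {u\<in>W. {u, x} \<notin> E}) \<le> (1 / real p - \<epsilon>) * k + 1" if "x \<in> W" for x
  proof -
    have "card {u\<in>W. {u, x} \<notin> E} = card (W - {u\<in>W. {u, x} \<in> E})"
      by (rule arg_cong[where f = card]) auto
    then have "real (card {u\<in>W. {u, x} \<notin> E}) = k - real (degree_in E W x)"
      using W unfolding k_def degree_in_def by (simp add: card_Diff_subset card_mono)
    moreover have "(1 - 1 / real p + \<epsilon>) * (k - 1) < real (degree_in E W x)"
      using min_degree that unfolding k_def by blast
    ultimately show ?thesis using \<epsilon> by (simp add: algebra_simps diff_divide_distrib)
  qed
  then have "k - m * ((1 / real p - \<epsilon>) * k + 1) \<le> real (card {u\<in>W. \<forall>x\<in>K. {u, x} \<in> E})"
    using card_common_neighbours_ge[OF W K(1)] K(1) unfolding k_def m_def by blast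
  moreover have "k - m * ((1 / real p - \<epsilon>) * k + 1) = k * (1 - m / real p) + m * (\<epsilon> * k - 1)"
    by (simp add: algebra_simps)
  moreover have "k * (1 - m / real p) \<ge> 0"
    using K(2) \<open>p \<ge> 1\<close> unfolding k_def m_def by (simp add: field_simps mult_right_mono)
  ultimately have C_ge:
      "k * (1 - m / real p) + m * (\<epsilon> * k - 1) \<le> real (card {u\<in>W. \<forall>x\<in>K. {u, x} \<in> E})"
    and "m * (\<epsilon> * k - 1) \<le> real (card {u\<in>W. \<forall>x\<in>K. {u, x} \<in> E})"
    by linarith+
  have "real q \<le> real (card {u\<in>W. \<forall>x\<in>K. {u, x} \<in> E})"
  proof (cases "m = 0")
    case True
    have "\<epsilon> * k \<le> k" using \<open>\<epsilon> \<le> 1\<close> \<epsilon> unfolding k_def by (simp add: mult_left_le_one_le)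
    then show ?thesis using C_ge \<epsilon>k True by simp
  next
    case False
    then have "\<epsilon> * k - 1 \<le> m * (\<epsilon> * k - 1)"
      using \<epsilon>k \<open>p \<ge> 1\<close> unfolding m_def by (simp add: mult_le_cancel_right1)
    then show ?thesis using \<open>m * (\<epsilon> * k - 1) \<le> _\<close> \<epsilon>k \<open>p \<ge> 1\<close> by simp
  qed
  then show ?thesis by simp
qed

lemma contains_book_if_min_degree:
  fixes \<epsilon> :: real
  assumes simple: "simple_graph n E" and W: "W \<subseteq> {..<n}"
    and "p \<ge> 1" "q \<ge> 1" "0 < \<epsilon>" "\<epsilon> \<le> 1 / real p"
    and min_degree: "\<forall>v\<in>W. (1 - 1 / real p + \<epsilon>) * (real (card W) - 1) < real (degree_in E W v)"
    and large: "real (p + q) / \<epsilon> \<le> real (card W)"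
  shows "contains_subgraph n E (p + q) (book_edges p q)"
proof (rule contains_book_if_common_neighbourhoods_large[OF simple W \<open>q \<ge> 1\<close>])
  have "finite W" using W finite_subset by blast
  then show "q \<le> card {u\<in>W. \<forall>x\<in>K. {u, x} \<in> E}" if "K \<subseteq> W" "card K \<le> p" for K
    using card_common_neighbours_ge_if_min_degree that assms(3-8) by blast
qed

lemma subset_with_min_degree:
  fixes c B :: real
  assumes simple: "simple_graph n E" and "finite W\<^sub>0"
    and "B \<le> real (\<Sum>v\<in>W\<^sub>0. degree_in E W\<^sub>0 v) - c * real (card W\<^sub>0) * (real (card W\<^sub>0) - 1)"
  obtains W where "W \<subseteq> W\<^sub>0"
    and "B \<le> real (\<Sum>v\<in>W. degree_in E W v) - c * real (card W) * (real (card W) - 1)"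
    and "\<forall>v\<in>W. c * (real (card W) - 1) < real (degree_in E W v)"
proof -
  define excess where
    "excess W = real (\<Sum>v\<in>W. degree_in E W v) - c * real (card W) * (real (card W) - 1)" for W
  have "\<exists>W\<subseteq>W\<^sub>0. B \<le> excess W \<and> (\<forall>v\<in>W. c * (real (card W) - 1) < real (degree_in E W v))"
    if "finite W\<^sub>0" "B \<le> excess W\<^sub>0" for W\<^sub>0
    using that
  proof (induction "card W\<^sub>0" arbitrary: W\<^sub>0 rule: less_induct)
    case less
    show ?case
    proof (cases "\<forall>v\<in>W\<^sub>0. c * (real (card W\<^sub>0) - 1) < real (degree_in E W\<^sub>0 v)")
      case True
      then show ?thesis using less.prems by blast
    next
      case False
      then obtain v where v: "v \<in> W\<^sub>0" "real (degree_in E W\<^sub>0 v) \<le> c * (real (card W\<^sub>0) - 1)"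
        by (auto simp: not_less)
      have "card W\<^sub>0 > 0" using less.prems(1) v(1) by (auto simp: card_gt_0_iff)
      then have card_less: "card (W\<^sub>0 - {v}) < card W\<^sub>0"
        and card_eq: "real (card (W\<^sub>0 - {v})) = real (card W\<^sub>0) - 1"
        using less.prems(1) v(1) by simp_all
      define d where "d = real (degree_in E W\<^sub>0 v) - c * (real (card W\<^sub>0) - 1)"
      have "excess W\<^sub>0 = excess (W\<^sub>0 - {v}) + 2 * d"
        unfolding excess_def d_def card_eq sum_degree_in_remove[OF simple less.prems(1) v(1)]
        by (simp add: algebra_simps)
      moreover have "d \<le> 0" using v(2) unfolding d_def by simp
      ultimately have "B \<le> excess (W\<^sub>0 - {v})" using less.prems(2) by linarith
      then obtain W where "W \<subseteq> W\<^sub>0 - {v}" "B \<le> excess W"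
        "\<forall>v\<in>W. c * (real (card W) - 1) < real (degree_in E W v)"
        using less.hyps[OF card_less] less.prems(1) by blast
      then show ?thesis by blast
    qed
  qed
  then show ?thesis using assms(2,3) that unfolding excess_def by blast
qed

lemma contains_book_if_dense:
  fixes \<epsilon> :: real
  assumes simple: "simple_graph n E" and W\<^sub>0: "W\<^sub>0 \<subseteq> {..<n}"
    and p: "p \<ge> 1" and q: "q \<ge> 1" and \<epsilon>: "0 < \<epsilon>" "\<epsilon> \<le> 1 / real p"
    and dense: "(1 - 1 / real p + \<epsilon>) * real (card W\<^sub>0) * (real (card W\<^sub>0) - 1) + (real (p + q) / \<epsilon>)\<^sup>2
      \<le> real (\<Sum>v\<in>W\<^sub>0. degree_in E W\<^sub>0 v)"
  shows "contains_subgraph n E (p + q) (book_edges p q)"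
proof -
  define c where "c = 1 - 1 / real p + \<epsilon>"
  have "finite W\<^sub>0" using W\<^sub>0 finite_subset by blast
  then obtain W where W: "W \<subseteq> W\<^sub>0"
    and excess: "(real (p + q) / \<epsilon>)\<^sup>2
      \<le> real (\<Sum>v\<in>W. degree_in E W v) - c * real (card W) * (real (card W) - 1)"
    and min_degree: "\<forall>v\<in>W. c * (real (card W) - 1) < real (degree_in E W v)"
    using subset_with_min_degree[OF simple, of W\<^sub>0 "(real (p + q) / \<epsilon>)\<^sup>2" c] dense
    unfolding c_def by (auto simp: algebra_simps)
  have "finite W" using \<open>finite W\<^sub>0\<close> W by (rule rev_finite_subset)
  have "1 / real p \<le> 1" using p by simp
  then have "c \<ge> 0" using \<epsilon> unfolding c_def by linarith
  moreover have "real (card W) * (real (card W) - 1) \<ge> 0" by (cases "card W") auto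
  ultimately have "c * real (card W) * (real (card W) - 1) \<ge> 0"
    by (metis mult.assoc mult_nonneg_nonneg)
  moreover have "(\<Sum>v\<in>W. degree_in E W v) \<le> card W ^ 2"
    using sum_bounded_above[of W "degree_in E W" "card W"] degree_in_le_card[OF \<open>finite W\<close>]
    by (simp add: power2_eq_square)
  then have "real (\<Sum>v\<in>W. degree_in E W v) \<le> (real (card W))\<^sup>2"
    by (metis of_nat_le_iff of_nat_power)
  ultimately have "(real (p + q) / \<epsilon>)\<^sup>2 \<le> (real (card W))\<^sup>2"
    using excess by linarith
  then have "real (p + q) / \<epsilon> \<le> real (card W)" by (rule power2_le_imp_le) simp
  then show ?thesis
    using contains_book_if_min_degree[OF simple _ p q \<epsilon>] W W\<^sub>0 min_degree unfolding c_def by blast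
qed

section \<open>A book-free graph with chromatic number greater than p\<close>

(* The Turan graph T_p(n) with the residue classes mod p as parts, changed inside classes 0 and 1:
   the edge {0, p} is added, 0 keeps only 1 as a neighbour in class 1, and p loses 1.  These two
   classes then carry the 5-cycle 0, p, p + 1, 2p, 1, which needs a third colour, but span no
   triangle, so the graph contains no K_{p+1}. *)

definition turan_c5_missing :: "nat \<Rightarrow> nat \<Rightarrow> nat \<Rightarrow> bool" where
  "turan_c5_missing p u v \<longleftrightarrow> (u = 0 \<and> v mod p = 1 \<and> v \<noteq> 1) \<or> (u = p \<and> v = 1)"

definition turan_c5_adj :: "nat \<Rightarrow> nat \<Rightarrow> nat \<Rightarrow> bool" where
  "turan_c5_adj p u v \<longleftrightarrow>
     (u mod p \<noteq> v mod p \<and> \<not> turan_c5_missing p u v \<and> \<not> turan_c5_missing p v u) \<or>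
     (u = 0 \<and> v = p) \<or> (u = p \<and> v = 0)"

definition turan_c5_edges :: "nat \<Rightarrow> nat \<Rightarrow> nat set set" where
  "turan_c5_edges n p = {{u, v} | u v. u < n \<and> v < n \<and> u \<noteq> v \<and> turan_c5_adj p u v}"

lemma turan_c5_adj_commute: "turan_c5_adj p u v \<longleftrightarrow> turan_c5_adj p v u"
  unfolding turan_c5_adj_def by auto

lemma turan_c5_edges_iff:
  "{x, y} \<in> turan_c5_edges n p \<longleftrightarrow> x < n \<and> y < n \<and> x \<noteq> y \<and> turan_c5_adj p x y"
  unfolding turan_c5_edges_def using turan_c5_adj_commute by (auto simp: doubleton_eq_iff)

lemma simple_graph_turan_c5: "simple_graph n (turan_c5_edges n p)"
  unfolding simple_graph_def turan_c5_edges_def by blast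

lemma turan_c5_adj_if_classes_differ:
  "u mod p \<noteq> v mod p \<Longrightarrow> u \<notin> {0, p} \<Longrightarrow> v \<notin> {0, p} \<Longrightarrow> turan_c5_adj p u v"
  unfolding turan_c5_adj_def turan_c5_missing_def by auto

lemma turan_c5_adj_high_class:
  assumes "2 \<le> j" "j < p" "x mod p \<le> 1"
  shows "turan_c5_adj p j x"
  using assms unfolding turan_c5_adj_def turan_c5_missing_def by auto

lemma turan_c5_adj_same_class:
  "turan_c5_adj p x y \<Longrightarrow> x mod p = y mod p \<Longrightarrow> (x = 0 \<and> y = p) \<or> (x = p \<and> y = 0)"
  unfolding turan_c5_adj_def by auto

lemma turan_c5_no_common_low_neighbour:
  assumes "p \<ge> 3" "z mod p \<le> 1" "z \<noteq> 0" "z \<noteq> p" "turan_c5_adj p 0 z"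
  shows "\<not> turan_c5_adj p p z"
proof (cases "z mod p = 0")
  case True
  then show ?thesis using assms turan_c5_adj_same_class[of p 0 z] by auto
next
  case False
  then have "z mod p = 1" using assms(2) by simp
  then have "z = 1" using assms unfolding turan_c5_adj_def turan_c5_missing_def by auto
  then show ?thesis using assms(1) unfolding turan_c5_adj_def turan_c5_missing_def by auto
qed

lemma turan_c5_low_classes_triangle_free:
  assumes p: "p \<ge> 3" and low: "x mod p \<le> 1" "y mod p \<le> 1" "z mod p \<le> 1"
    and distinct: "x \<noteq> y" "y \<noteq> z" "x \<noteq> z"
    and adj: "turan_c5_adj p x y" "turan_c5_adj p y z" "turan_c5_adj p x z"
  shows False
proof -
  have no_apex: False if "turan_c5_adj p a b" "a mod p = b mod p" "a \<noteq> b"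
      "turan_c5_adj p a c" "turan_c5_adj p b c" "c mod p \<le> 1" "c \<noteq> a" "c \<noteq> b" for a b c
    using turan_c5_adj_same_class[OF that(1,2)] turan_c5_no_common_low_neighbour[OF p that(6)] that(4,5,7,8)
    by auto
  have adj': "turan_c5_adj p y x" "turan_c5_adj p z y" "turan_c5_adj p z x"
    using adj by (simp_all add: turan_c5_adj_commute)
  consider "x mod p = y mod p" | "y mod p = z mod p" | "x mod p = z mod p" using low by linarith
  then show False
  proof cases
    case 1
    then show False using no_apex[of x y z] adj distinct low by blast
  next
    case 2
    then show False using no_apex[of y z x] adj adj' distinct low by blast
  next
    case 3
    then show False using no_apex[of x z y] adj adj' distinct low by blast
  qed
qed

lemma turan_c5_clique_card_le:
  assumes p: "p \<ge> 3" and "finite X" and clique: "\<forall>x\<in>X. \<forall>y\<in>X. x \<noteq> y \<longrightarrow> turan_c5_adj p x y"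
  shows "card X \<le> p"
proof -
  define L where "L = {x. x mod p \<le> 1}"
  have "card (X \<inter> L) \<le> 2"
  proof (rule ccontr)
    assume "\<not> card (X \<inter> L) \<le> 2"
    then have "3 \<le> card (X \<inter> L)" by simp
    then obtain T where "T \<subseteq> X \<inter> L" "card T = 3" by (rule obtain_subset_with_card_n)
    then obtain x y z where "x \<in> X \<inter> L" "y \<in> X \<inter> L" "z \<in> X \<inter> L" "x \<noteq> y" "y \<noteq> z" "x \<noteq> z"
      by (auto simp: card_3_iff)
    then show False
      using turan_c5_low_classes_triangle_free[OF p, of x y z] clique unfolding L_def by simp
  qed
  moreover have "card (X - L) \<le> p - 2"
  proof -
    have "inj_on (\<lambda>x. x mod p) (X - L)"
      using clique turan_c5_adj_same_class unfolding L_def inj_on_def by fastforce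
    moreover have "(\<lambda>x. x mod p) ` (X - L) \<subseteq> {2..<p}" using p unfolding L_def by auto
    ultimately show ?thesis using card_inj_on_le[of _ "X - L" "{2..<p}"] by fastforce
  qed
  moreover have "card X = card (X \<inter> L) + card (X - L)"
    using \<open>finite X\<close> by (rule card_Int_Diff)
  ultimately show ?thesis using p by linarith
qed

lemma turan_c5_not_colorable:
  assumes p: "p \<ge> 3" and n: "2 * p < n"
  shows "\<not> colorable n (turan_c5_edges n p) p"
proof
  assume "colorable n (turan_c5_edges n p) p"
  then obtain c where range: "\<forall>v<n. c v < p"
    and proper: "\<forall>u v. u \<noteq> v \<longrightarrow> {u, v} \<in> turan_c5_edges n p \<longrightarrow> c u \<noteq> c v"
    unfolding colorable_def by blast
  have differ: "c u \<noteq> c v" if "turan_c5_adj p u v" "u < n" "v < n" "u \<noteq> v" for u v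
    using proper that turan_c5_edges_iff by blast
  have "inj_on c {2..<p}"
  proof (rule inj_onI, rule ccontr)
    fix x y assume xy: "x \<in> {2..<p}" "y \<in> {2..<p}" "c x = c y" "x \<noteq> y"
    then have "turan_c5_adj p x y" by (intro turan_c5_adj_if_classes_differ) auto
    then show False using differ[of x y] xy n by simp
  qed
  then have "card (c ` {2..<p}) = p - 2" by (simp add: card_image)
  moreover have "c ` {2..<p} \<subseteq> {..<p}" using range n by auto
  ultimately have "card ({..<p} - c ` {2..<p}) = 2" using p by (subst card_Diff_subset) auto
  then obtain r\<^sub>1 r\<^sub>2 where R: "{..<p} - c ` {2..<p} = {r\<^sub>1, r\<^sub>2}" by (auto simp: card_2_iff)
  have low: "c x \<in> {r\<^sub>1, r\<^sub>2}" if "x < n" "x mod p \<le> 1" for x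
  proof -
    have avoid: "c x \<noteq> c j" if "j \<in> {2..<p}" for j
    proof -
      have "j \<noteq> x" using that \<open>x mod p \<le> 1\<close> by auto
      then show ?thesis
        using differ[OF turan_c5_adj_high_class[of j p x]] that \<open>x < n\<close> \<open>x mod p \<le> 1\<close> n by auto
    qed
    then have "c x \<notin> c ` {2..<p}" by blast
    then show ?thesis using range \<open>x < n\<close> unfolding R[symmetric] by simp
  qed
  have mods: "p mod p = 0" "(p + 1) mod p = 1" "(2 * p) mod p = 0" "1 mod p = 1"
    using p by (simp_all add: mod_Suc)
  then have "c 0 \<in> {r\<^sub>1, r\<^sub>2}" "c p \<in> {r\<^sub>1, r\<^sub>2}" "c (p + 1) \<in> {r\<^sub>1, r\<^sub>2}"
    "c (2 * p) \<in> {r\<^sub>1, r\<^sub>2}" "c 1 \<in> {r\<^sub>1, r\<^sub>2}"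
    using low[of 0] low[of p] low[of "p + 1"] low[of "2 * p"] low[of 1] mods n p by auto
  moreover have "turan_c5_adj p 0 p" "turan_c5_adj p p (p + 1)" "turan_c5_adj p (p + 1) (2 * p)"
    "turan_c5_adj p (2 * p) 1" "turan_c5_adj p 1 0"
    using p mods unfolding turan_c5_adj_def turan_c5_missing_def by auto
  then have "c 0 \<noteq> c p" "c p \<noteq> c (p + 1)" "c (p + 1) \<noteq> c (2 * p)" "c (2 * p) \<noteq> c 1" "c 1 \<noteq> c 0"
    using differ n p by simp_all
  ultimately show False by auto
qed

lemma turan_c5_book_free:
  assumes p: "p \<ge> 3" and "q \<ge> 1"
  shows "\<not> contains_subgraph n (turan_c5_edges n p) (p + q) (book_edges p q)"
proof
  assume "contains_subgraph n (turan_c5_edges n p) (p + q) (book_edges p q)"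
  then obtain f where inj: "inj_on f {..<p + q}"
    and edges: "\<forall>u v. {u, v} \<in> book_edges p q \<longrightarrow> {f u, f v} \<in> turan_c5_edges n p"
    unfolding contains_subgraph_def by blast
  have sub: "{..<p + 1} \<subseteq> {..<p + q}" using \<open>q \<ge> 1\<close> by auto
  have "\<forall>x\<in>f ` {..<p + 1}. \<forall>y\<in>f ` {..<p + 1}. x \<noteq> y \<longrightarrow> turan_c5_adj p x y"
  proof (intro ballI impI)
    fix x y assume "x \<in> f ` {..<p + 1}" "y \<in> f ` {..<p + 1}" "x \<noteq> y"
    then obtain i j where "i < p + 1" "j < p + 1" "i \<noteq> j" "x = f i" "y = f j" by auto
    then have "{i, j} \<in> book_edges p q" using \<open>q \<ge> 1\<close> unfolding book_edges_def by force
    then show "turan_c5_adj p x y" using edges turan_c5_edges_iff \<open>x = f i\<close> \<open>y = f j\<close> by blast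
  qed
  then have "card (f ` {..<p + 1}) \<le> p" by (intro turan_c5_clique_card_le[OF p]) auto
  moreover have "card (f ` {..<p + 1}) = p + 1" using inj_on_subset[OF inj sub] by (simp add: card_image)
  ultimately show False by simp
qed

lemma card_residue_class_le:
  assumes "0 < p"
  shows "card {u\<in>{..<n}. u mod p = r} \<le> n div p + 1"
proof -
  have "{u\<in>{..<n}. u mod p = r} \<subseteq> (\<lambda>i. r + p * i) ` {..n div p}"
  proof
    fix u assume u: "u \<in> {u\<in>{..<n}. u mod p = r}"
    have "u = u mod p + p * (u div p)" by simp
    moreover have "u div p \<le> n div p" using u by (simp add: div_le_mono)
    ultimately show "u \<in> (\<lambda>i. r + p * i) ` {..n div p}" using u by force
  qed
  then have "card {u\<in>{..<n}. u mod p = r} \<le> card ((\<lambda>i. r + p * i) ` {..n div p})"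
    by (intro card_mono) auto
  also have "\<dots> \<le> n div p + 1" using card_image_le[of "{..n div p}"] by simp
  finally show ?thesis .
qed

lemma degree_turan_c5_ge:
  assumes p: "p \<ge> 3" and v: "v < n" "v \<notin> {0, p}"
  shows "n - (n div p + 1) - 2 \<le> degree (turan_c5_edges n p) v"
proof -
  define C where "C = {u\<in>{..<n}. u mod p = v mod p}"
  have "card C \<le> n div p + 1" using card_residue_class_le[of p n "v mod p"] p unfolding C_def by simp
  then have "n - (n div p + 1) - 2 \<le> card ({..<n} - C) - 2"
    by (subst card_Diff_subset) (auto simp: C_def)
  also have "\<dots> \<le> card ({..<n} - C - {0, p})"
    using diff_card_le_card_Diff[of "{0, p}" "{..<n} - C"] card_insert_le_m1[of 2 "{p}" 0] by fastforce
  also have "\<dots> \<le> degree (turan_c5_edges n p) v"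
    unfolding degree_def
  proof (rule card_mono)
    show "finite {u. {u, v} \<in> turan_c5_edges n p}"
      by (rule finite_subset[of _ "{..<n}"]) (auto simp: turan_c5_edges_iff)
    show "{..<n} - C - {0, p} \<subseteq> {u. {u, v} \<in> turan_c5_edges n p}"
      using turan_c5_adj_if_classes_differ v unfolding C_def by (auto simp: turan_c5_edges_iff)
  qed
  finally show ?thesis .
qed

lemma sum_degree_turan_c5_ge:
  assumes p: "p \<ge> 3" and n: "2 * p < n"
  shows "(1 - 1 / real p) * (real n)\<^sup>2 - 5 * real n \<le> real (\<Sum>v<n. degree (turan_c5_edges n p) v)"
proof -
  define D where "D = n - (n div p + 1) - 2"
  have "2 \<le> n" using n p by simp
  have "n div p \<le> n div 3" using p by (simp add: div_le_mono2)
  moreover have "n div 3 + 3 \<le> n" using n p by presburger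
  ultimately have "real D = real n - real (n div p) - 3" unfolding D_def by simp
  then have D: "real n - real n / real p - 3 \<le> real D" using of_nat_div_le_of_nat[of n p] by simp
  have "(1 - 1 / real p) * (real n)\<^sup>2 - 5 * real n
      = (real n - 2) * (real n - real n / real p - 3) - (2 * real n / real p + 6)"
    by (simp add: algebra_simps power2_eq_square diff_divide_distrib)
  also have "\<dots> \<le> (real n - 2) * (real n - real n / real p - 3)"
    using divide_nonneg_nonneg[of "2 * real n" "real p"] by linarith
  also have "\<dots> \<le> (real n - 2) * real D" using D \<open>2 \<le> n\<close> by (intro mult_left_mono) auto
  also have "\<dots> = real (n - 2) * real D" using \<open>2 \<le> n\<close> by simp
  also have "\<dots> = real (card ({..<n} - {0, p}) * D)" using n p by (simp add: card_Diff_subset)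
  also have "card ({..<n} - {0, p}) * D \<le> (\<Sum>v\<in>{..<n} - {0, p}. degree (turan_c5_edges n p) v)"
    using degree_turan_c5_ge[OF p] sum_mono[of "{..<n} - {0, p}" "\<lambda>_. D"] unfolding D_def by simp
  also have "\<dots> \<le> (\<Sum>v<n. degree (turan_c5_edges n p) v)" by (rule sum_mono2) auto
  finally show ?thesis by simp
qed

section \<open>Few vertices of low degree\<close>

lemma extremal_sum_degree_ge:
  assumes p: "p \<ge> 3" and q: "q \<ge> 1" and n: "2 * p < n" and E: "E \<in> extremal_family n p q"
  shows "(1 - 1 / real p) * (real n)\<^sup>2 - 5 * real n \<le> real (\<Sum>v<n. degree E v)"
proof -
  have "admissible n p q (turan_c5_edges n p)"
    unfolding admissible_def
    using simple_graph_turan_c5 chromatic_number_gt_if_not_colorable[OF turan_c5_not_colorable[OF p n]]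
      turan_c5_book_free[OF p q] by blast
  moreover have "admissible n p q E" "\<And>E'. admissible n p q E' \<Longrightarrow> card E' \<le> card E"
    using E unfolding extremal_family_def by auto
  ultimately have "(\<Sum>v<n. degree (turan_c5_edges n p) v) \<le> (\<Sum>v<n. degree E v)"
    using sum_degree_eq_twice_card_edges simple_graph_turan_c5 unfolding admissible_def by simp
  then show ?thesis using sum_degree_turan_c5_ge[OF p n] by (meson of_nat_le_iff order_trans)
qed

(* a stands for 1 - 1/p, k for the number of deleted vertices of degree at most (a - 5 eta) n, and
   K for the excess required by contains_book_if_dense with epsilon = eta^2. *)
lemma removal_excess_arith:
  fixes a \<eta> n k K :: real
  assumes a: "0 \<le> a" "a \<le> 1" and \<eta>: "0 < \<eta>" "\<eta> \<le> 1"
    and k: "\<eta> * n \<le> k" "k \<le> \<eta> * n + 1" "k \<le> n"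
    and n: "1 \<le> n" and K: "0 \<le> K" "8 + K \<le> \<eta>\<^sup>2 * n"
  shows "(a + \<eta>\<^sup>2) * (n - k) * (n - k - 1) + K \<le> a * n\<^sup>2 - 5 * n - 2 * k * ((a - 5 * \<eta>) * n)"
proof -
  have "0 \<le> k" using k \<eta> n by (smt (verit) mult_nonneg_nonneg)
  have "(n - k) * (n - k - 1) \<le> (n - k)\<^sup>2" using k by (simp add: power2_eq_square algebra_simps)
  then have "(a + \<eta>\<^sup>2) * (n - k) * (n - k - 1) \<le> (a + \<eta>\<^sup>2) * (n - k)\<^sup>2"
    using a by (simp add: mult.assoc mult_left_mono)
  also have "\<dots> \<le> a * (n - k)\<^sup>2 + \<eta>\<^sup>2 * n\<^sup>2"
  proof -
    have "(n - k)\<^sup>2 \<le> n\<^sup>2" using \<open>0 \<le> k\<close> k by (intro power_mono) auto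
    then show ?thesis by (simp add: distrib_right mult_left_mono)
  qed
  finally have lhs: "(a + \<eta>\<^sup>2) * (n - k) * (n - k - 1) \<le> a * (n - k)\<^sup>2 + \<eta>\<^sup>2 * n\<^sup>2" .
  have "\<eta>\<^sup>2 * n\<^sup>2 \<le> \<eta> * k * n"
    using k \<eta> n by (simp add: power2_eq_square mult_right_mono mult_left_mono)
  moreover have "a * k\<^sup>2 \<le> \<eta>\<^sup>2 * n\<^sup>2 + 2 * n + 1"
  proof -
    have "a * k\<^sup>2 \<le> k\<^sup>2" using a by (simp add: mult_left_le_one_le)
    also have "\<dots> \<le> (\<eta> * n + 1)\<^sup>2" using \<open>0 \<le> k\<close> k by (simp add: power_mono)
    also have "\<dots> \<le> \<eta>\<^sup>2 * n\<^sup>2 + 2 * n + 1"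
      using \<eta> n by (simp add: power2_eq_square algebra_simps mult_left_le_one_le)
    finally show ?thesis .
  qed
  moreover have "8 * n + K \<le> \<eta>\<^sup>2 * n\<^sup>2"
    using K n mult_right_mono[OF K(2), of n] mult_left_mono[OF n K(1)]
    by (simp add: power2_eq_square algebra_simps)
  moreover have "a * n\<^sup>2 - 5 * n - 2 * k * ((a - 5 * \<eta>) * n)
      = a * (n - k)\<^sup>2 - a * k\<^sup>2 - 5 * n + 10 * (\<eta> * k * n)"
    by (simp add: power2_eq_square algebra_simps)
  ultimately show ?thesis using lhs n K(1) by linarith
qed

lemma card_low_degree_le:
  fixes \<eta> :: real
  assumes simple: "simple_graph n E" and free: "\<not> contains_subgraph n E (p + q) (book_edges p q)"
    and p: "p \<ge> 1" and q: "q \<ge> 1" and \<eta>: "0 < \<eta>" "\<eta> \<le> 1 / real p"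
    and dense: "(1 - 1 / real p) * (real n)\<^sup>2 - 5 * real n \<le> real (\<Sum>v<n. degree E v)"
    and large: "8 + (real (p + q) / \<eta>\<^sup>2)\<^sup>2 \<le> \<eta>\<^sup>2 * real n"
  shows "real (card {v \<in> {..<n}. real (degree E v) \<le> ((real p - 1) / real p - 5 * \<eta>) * real n})
    \<le> \<eta> * real n"
proof (rule ccontr)
  define a where "a = 1 - 1 / real p"
  define S where "S = {v \<in> {..<n}. real (degree E v) \<le> (a - 5 * \<eta>) * real n}"
  define k where "k = nat \<lceil>\<eta> * real n\<rceil>"
  have "(real p - 1) / real p = a" using p unfolding a_def by (simp add: diff_divide_distrib)
  moreover assume "\<not> ?thesis"
  ultimately have "\<eta> * real n < real (card S)" unfolding S_def by simp
  then have "k \<le> card S" unfolding k_def by (simp add: nat_le_iff ceiling_le_iff)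
  then obtain T where T: "T \<subseteq> S" "card T = k" by (rule obtain_subset_with_card_n)
  have "T \<subseteq> {..<n}" using T(1) unfolding S_def by auto
  have "card S \<le> n" using card_mono[of "{..<n}" S] unfolding S_def by auto
  have "1 / real p \<le> 1" using p by simp
  then have a: "0 \<le> a" "a \<le> 1" and "\<eta> \<le> 1" using \<eta> unfolding a_def by auto
  have "0 < \<eta>\<^sup>2 * real n" using large by (smt (verit) zero_le_power2)
  then have n: "1 \<le> real n" by (simp add: zero_less_mult_iff)
  have "k \<le> n" using \<open>k \<le> card S\<close> \<open>card S \<le> n\<close> by simp
  then have "real k \<le> real n" by simp
  then have k: "\<eta> * real n \<le> real k" "real k \<le> \<eta> * real n + 1" "real k \<le> real n"
    using \<eta> unfolding k_def by simp_all
  define W where "W = {..<n} - T"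
  have "finite T" using \<open>T \<subseteq> {..<n}\<close> finite_subset by blast
  then have card_W: "real (card W) = real n - real k"
    using \<open>T \<subseteq> {..<n}\<close> T(2) \<open>k \<le> n\<close> unfolding W_def by (simp add: card_Diff_subset)
  have "\<forall>v\<in>T. real (degree E v) \<le> (a - 5 * \<eta>) * real n" using T(1) unfolding S_def by auto
  then have "real (\<Sum>v<n. degree E v) - 2 * real k * ((a - 5 * \<eta>) * real n)
      \<le> real (\<Sum>v\<in>W. degree_in E W v)"
    using sum_degree_in_Diff_ge[OF simple \<open>T \<subseteq> {..<n}\<close>] T(2) unfolding W_def by simp
  then have "a * (real n)\<^sup>2 - 5 * real n - 2 * real k * ((a - 5 * \<eta>) * real n)
      \<le> real (\<Sum>v\<in>W. degree_in E W v)"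
    using dense unfolding a_def by linarith
  then have "(a + \<eta>\<^sup>2) * real (card W) * (real (card W) - 1) + (real (p + q) / \<eta>\<^sup>2)\<^sup>2
      \<le> real (\<Sum>v\<in>W. degree_in E W v)"
    using removal_excess_arith[OF a \<eta>(1) \<open>\<eta> \<le> 1\<close> k n _ large] unfolding card_W by simp
  moreover have "\<eta>\<^sup>2 \<le> 1 / real p"
    using \<eta> \<open>\<eta> \<le> 1\<close> by (smt (verit) mult_left_le_one_le power2_eq_square)
  ultimately have "contains_subgraph n E (p + q) (book_edges p q)"
    using contains_book_if_dense[OF simple _ p q, of W "\<eta>\<^sup>2"] \<eta>(1) unfolding W_def a_def by auto
  then show False using free by contradiction
qed

theorem lemma3p2:
  fixes p q :: nat and \<eta> :: real
  assumes "p \<ge> 3" and "q \<ge> 1" and "0 < \<eta>" and "\<eta> < 1 / (7 * real p ^ 5 * real q)"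
  shows "\<exists>N. \<forall>n \<ge> N. \<forall>E.
           E \<in> extremal_family n p q \<and>
           min_degree n E = Min (min_degree n ` extremal_family n p q) \<longrightarrow>
           real (card {v \<in> {..<n}. real (degree E v) \<le> ((real p - 1) / real p - 5 * \<eta>) * real n})
             \<le> \<eta> * real n"
proof -
  have "p \<le> p ^ 5" using assms(1) by (simp add: self_le_power)
  also have "\<dots> \<le> p ^ 5 * (7 * q)" using assms(2) by simp
  finally have "real p \<le> real (p ^ 5 * (7 * q))" by (rule of_nat_mono)
  then have "real p \<le> 7 * real p ^ 5 * real q" by (simp add: algebra_simps)
  then have "\<eta> \<le> 1 / real p"
    using assms(1,3,4) frac_le[of 1 1 "real p" "7 * real p ^ 5 * real q"] by simp
  define K where "K = (real (p + q) / \<eta>\<^sup>2)\<^sup>2"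
  show ?thesis
  proof (intro exI[of _ "max (2 * p + 1) (nat \<lceil>(8 + K) / \<eta>\<^sup>2\<rceil>)"] allI impI)
    fix n E assume n: "max (2 * p + 1) (nat \<lceil>(8 + K) / \<eta>\<^sup>2\<rceil>) \<le> n"
      and E: "E \<in> extremal_family n p q \<and> min_degree n E = Min (min_degree n ` extremal_family n p q)"
    then have "(8 + K) / \<eta>\<^sup>2 \<le> real n" by linarith
    then have large: "8 + K \<le> \<eta>\<^sup>2 * real n" using assms(3) by (simp add: divide_le_eq mult.commute)
    have "simple_graph n E" "\<not> contains_subgraph n E (p + q) (book_edges p q)"
      using E unfolding extremal_family_def admissible_def by auto
    moreover have "(1 - 1 / real p) * (real n)\<^sup>2 - 5 * real n \<le> real (\<Sum>v<n. degree E v)"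
      using extremal_sum_degree_ge[OF assms(1,2)] n E by auto
    ultimately show "real (card {v \<in> {..<n}. real (degree E v) \<le> ((real p - 1) / real p - 5 * \<eta>) * real n})
        \<le> \<eta> * real n"
      using card_low_degree_le[of n E p q \<eta>] assms(1-3) \<open>\<eta> \<le> 1 / real p\<close> large unfolding K_def by simp
  qed
qed

end
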